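(* Let $T_{13}=\mathbf{e}^1_1\otimes(\mathbf{e}^2_1\otimes\mathbf{e}^3_1+\mathbf{e}^2_2\otimes\mathbf{e}^3_3)+\mathbf{e}^1_2\otimes(\mathbf{e}^2_1\otimes\mathbf{e}^3_2+\mathbf{e}^2_3\otimes\mathbf{e}^3_3)\in\mathbb{C}^2\otimes\mathbb{C}^3\otimes\mathbb{C}^3$ (a tensor of rank $4$) and $\varphi(\mathbf{a},\mathbf{b},\mathbf{c})=a_1b_1c_1+a_2b_1c_2+a_1b_2c_3+a_2b_3c_3$. A rank-one tensor $P=\mathbf{a}\otimes\mathbf{b}\otimes\mathbf{c}$ lies in the forbidden locus of $T_{13}$ if and only if one of the following holds: (i) ($a_1c_1+a_2c_2=0$ or $a_1b_2+a_2b_3=0$), and not ($b_2=b_3=0$), and not ($c_1=c_2=0$); (ii) ($b_3c_1-b_2c_2=0$ or $a_1c_1+a_2c_2=0$ or $a_1b_2+a_2b_3=0$) and $\varphi(\mathbf{a},\mathbf{b},\mathbf{c})=0$.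
   Context: $\mathbf{e}^i_j$ is the $j$-th standard basis vector of the $i$-th factor and $\mathbf{a}=(a_1,a_2)$, $\mathbf{b}=(b_1,b_2,b_3)$, $\mathbf{c}=(c_1,c_2,c_3)$ are nonzero coordinate vectors. The rank of a tensor is the minimal number of rank-one tensors summing to it; $P$ is in the forbidden locus of $T$ if $\mathrm{rk}(T-\lambda P)\ge\mathrm{rk}(T)$ for all $\lambda\in\mathbb{C}$. *)

theory Defs
  imports Complex_Main
begin

text \<open>Tensors in C^2 (x) C^3 (x) C^3 are represented as functions of three
  0-based indices (i < 2, j < 3, k < 3), zero outside that range. Vectors are
  functions nat => complex of which only the entries 0..1 (resp. 0..2) matter;
  so the paper's a_1, a_2 are a 0, a 1, etc.\<close>

type_synonym tensor = "nat \<Rightarrow> nat \<Rightarrow> nat \<Rightarrow> complex"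

definition outer :: "(nat \<Rightarrow> complex) \<Rightarrow> (nat \<Rightarrow> complex) \<Rightarrow> (nat \<Rightarrow> complex) \<Rightarrow> tensor" where
  "outer a b c = (\<lambda>i j k. if i < 2 \<and> j < 3 \<and> k < 3 then a i * b j * c k else 0)"

definition ebasis :: "nat \<Rightarrow> nat \<Rightarrow> complex" where
  "ebasis n = (\<lambda>i. if i = n then 1 else 0)"

text \<open>Rank: minimal number of rank-one tensors summing to T (allowing zero
  summands does not change the minimum).\<close>
definition tensor_rank :: "tensor \<Rightarrow> nat" where
  "tensor_rank T = (LEAST r. \<exists>a b c :: nat \<Rightarrow> nat \<Rightarrow> complex.
      T = (\<lambda>i j k. \<Sum>l<r. outer (a l) (b l) (c l) i j k))"

definition forbidden :: "tensor \<Rightarrow> tensor \<Rightarrow> bool" where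
  "forbidden T P = (\<forall>t::complex. tensor_rank (\<lambda>i j k. T i j k - t * P i j k) \<ge> tensor_rank T)"

definition T13 :: tensor where
  "T13 = (\<lambda>i j k. outer (ebasis 0) (ebasis 0) (ebasis 0) i j k
                + outer (ebasis 0) (ebasis 1) (ebasis 2) i j k
                + outer (ebasis 1) (ebasis 0) (ebasis 1) i j k
                + outer (ebasis 1) (ebasis 2) (ebasis 2) i j k)"

definition phi :: "(nat \<Rightarrow> complex) \<Rightarrow> (nat \<Rightarrow> complex) \<Rightarrow> (nat \<Rightarrow> complex) \<Rightarrow> complex" where
  "phi a b c = a 0 * b 0 * c 0 + a 1 * b 0 * c 1 + a 0 * b 1 * c 2 + a 1 * b 2 * c 2"

end

theory Submission
  imports Defs
begin

text \<open>Let \<open>M\<^sub>t = T13 - t P\<close> with \<open>P = a \<otimes> b \<otimes> c\<close>. As \<open>T13\<close> has rank 4, \<open>P\<close> is forbidden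
  iff \<open>M\<^sub>t\<close> has rank at least 4 for every \<open>t \<noteq> 0\<close>. If \<open>M = \<Sum>\<^sub>l<3 \<alpha>\<^sub>l \<otimes> x\<^sub>l \<otimes> y\<^sub>l\<close>, the
  determinant of the pencil \<open>s M\<^sub>0 + u M\<^sub>1\<close> of its \<open>3 \<times> 3\<close> slices is
  \<open>\<Prod>\<^sub>l (s \<alpha>\<^sub>l\<^sub>1 + u \<alpha>\<^sub>l\<^sub>2) \<cdot> det X \<cdot> det Y\<close>, while for \<open>M\<^sub>t\<close> it is
  \<open>-t (a\<^sub>1 s + a\<^sub>2 u)(b\<^sub>2 u - b\<^sub>3 s)(c\<^sub>2 s - c\<^sub>1 u)\<close>. Hence in a rank-3 decomposition a double
  root of this determinant is a slice of rank at most one, and an identically vanishing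
  determinant is incompatible with nonsingular minors of the flattenings. Under (i) or (ii)
  one of these is contradicted by an explicit minor of \<open>M\<^sub>t\<close>. In all other cases some \<open>M\<^sub>t\<close>
  has an explicit rank-3 decomposition, found in the generic case by simultaneously
  diagonalising its two slices.\<close>

type_synonym mat = "nat \<Rightarrow> nat \<Rightarrow> complex"

definition det3 :: "mat \<Rightarrow> complex" where
  "det3 m = m 0 0 * (m 1 1 * m 2 2 - m 1 2 * m 2 1) - m 0 1 * (m 1 0 * m 2 2 - m 1 2 * m 2 0)
          + m 0 2 * (m 1 0 * m 2 1 - m 1 1 * m 2 0)"

text \<open>The derivative of \<open>\<epsilon> \<mapsto> det3 (A + \<epsilon> B)\<close> at \<open>\<epsilon> = 0\<close>.\<close>
definition det3_deriv :: "mat \<Rightarrow> mat \<Rightarrow> complex" where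
  "det3_deriv A B = det3 (\<lambda>j k. if k = 0 then B j k else A j k)
     + det3 (\<lambda>j k. if k = 1 then B j k else A j k) + det3 (\<lambda>j k. if k = 2 then B j k else A j k)"

definition slice_comb :: "tensor \<Rightarrow> complex \<Rightarrow> complex \<Rightarrow> mat" where
  "slice_comb M s u = (\<lambda>j k. s * M 0 j k + u * M 1 j k)"

definition rank3_decomp :: "tensor \<Rightarrow> mat \<Rightarrow> mat \<Rightarrow> mat \<Rightarrow> bool" where
  "rank3_decomp M \<alpha> x y \<longleftrightarrow>
     (\<forall>i<2. \<forall>j<3. \<forall>k<3. M i j k = (\<Sum>l<3. \<alpha> l i * x l j * y l k))"

lemma sum_lessThan_3: "(\<Sum>l<3. f (l::nat)) = f 0 + f 1 + (f 2 :: complex)"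
  by (simp add: eval_nat_numeral)

lemma all_less_2: "(\<forall>i::nat<2. Q i) \<longleftrightarrow> Q 0 \<and> Q 1"
  by (auto simp: eval_nat_numeral less_Suc_eq)

lemma all_less_3: "(\<forall>i::nat<3. Q i) \<longleftrightarrow> Q 0 \<and> Q 1 \<and> Q 2"
  by (auto simp: eval_nat_numeral less_Suc_eq)

lemma det3_mult: "det3 (\<lambda>j n. \<Sum>l<3. x j l * z l n) = det3 x * det3 z"
  unfolding det3_def sum_lessThan_3 by algebra

lemma det3_cong: "\<forall>j<3. \<forall>k<3. A j k = B j k \<Longrightarrow> det3 A = det3 B"
  unfolding all_less_3 det3_def by simp

lemma det3_deriv_cong:
  "\<forall>j<3. \<forall>k<3. A j k = B j k \<Longrightarrow> \<forall>j<3. \<forall>k<3. A' j k = B' j k \<Longrightarrow> det3_deriv A A' = det3_deriv B B'"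
  unfolding all_less_3 det3_deriv_def det3_def by simp

lemma det3_zero_row: "l < 3 \<Longrightarrow> \<forall>n<3. Z l n = 0 \<Longrightarrow> det3 Z = 0"
  unfolding all_less_3 det3_def by (auto simp: eval_nat_numeral less_Suc_eq)

lemma det3_sum_rank_one:
  "det3 (\<lambda>j k. \<Sum>l<3. d l * x l j * y l k) = d 0 * d 1 * d 2 * det3 (\<lambda>j l. x l j) * det3 y"
  unfolding det3_def sum_lessThan_3 by algebra

lemma det3_deriv_sum_rank_one:
  "det3_deriv (\<lambda>j k. \<Sum>l<3. d l * x l j * y l k) (\<lambda>j k. \<Sum>l<3. e l * x l j * y l k)
     = (e 0 * d 1 * d 2 + d 0 * e 1 * d 2 + d 0 * d 1 * e 2) * det3 (\<lambda>j l. x l j) * det3 y"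
  unfolding det3_deriv_def det3_def sum_lessThan_3 by (simp; algebra)

definition cross3 :: "(nat \<Rightarrow> complex) \<Rightarrow> (nat \<Rightarrow> complex) \<Rightarrow> nat \<Rightarrow> complex" where
  "cross3 p q = (\<lambda>j. [p 1 * q 2 - p 2 * q 1, p 2 * q 0 - p 0 * q 2, p 0 * q 1 - p 1 * q 0] ! j)"

definition cofactor3 :: "mat \<Rightarrow> mat" where
  "cofactor3 w = (\<lambda>l. [cross3 (w 1) (w 2), cross3 (w 2) (w 0), cross3 (w 0) (w 1)] ! l)"

text \<open>Cramer's rule for \<open>N = w\<^sup>-\<^sup>1 (w N v\<^sup>T) v\<^sup>-\<^sup>T\<close>.\<close>
lemma det3_mult_eq_cofactor_sandwich:
  assumes "j < 3" "k < 3"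
  shows "det3 w * det3 v * N j k =
    (\<Sum>l<3. \<Sum>m<3. (\<Sum>j'<3. \<Sum>k'<3. w l j' * N j' k' * v m k') * cofactor3 w l j * cofactor3 v m k)"
proof -
  have "\<forall>j<3. \<forall>k<3. det3 w * det3 v * N j k =
    (\<Sum>l<3. \<Sum>m<3. (\<Sum>j'<3. \<Sum>k'<3. w l j' * N j' k' * v m k') * cofactor3 w l j * cofactor3 v m k)"
    unfolding all_less_3 sum_lessThan_3 cofactor3_def cross3_def det3_def by (simp; algebra)
  then show ?thesis using assms by blast
qed

lemma binary_cubic_nonvanishing:
  fixes p0 q0 p1 q1 p2 q2 :: complex
  assumes "p0 \<noteq> 0 \<or> q0 \<noteq> 0" "p1 \<noteq> 0 \<or> q1 \<noteq> 0" "p2 \<noteq> 0 \<or> q2 \<noteq> 0"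
  shows "\<exists>s u. (s * p0 + u * q0) * (s * p1 + u * q1) * (s * p2 + u * q2) \<noteq> 0"
proof (rule ccontr)
  assume "\<not> ?thesis"
  then have zero: "(s * p0 + u * q0) * (s * p1 + u * q1) * (s * p2 + u * q2) = 0" for s u
    by blast
  text \<open>A nonzero linear form vanishes at most at one of \<open>(1,0), (0,1), (1,1), (1,2)\<close>.\<close>
  have at_most_one: "(if p = 0 then 1 else 0) + (if q = 0 then 1 else 0)
     + (if p + q = 0 then 1 else 0) + (if p + 2 * q = 0 then 1 else (0::nat)) \<le> 1"
    if "p \<noteq> 0 \<or> q \<noteq> 0" for p q :: complex
    using that by (auto simp: add_eq_0_iff2)
  show False
    using assms zero[of 1 0] zero[of 0 1] zero[of 1 1] zero[of 1 2]
      at_most_one[of p0 q0] at_most_one[of p1 q1] at_most_one[of p2 q2]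
    by (auto split: if_splits)
qed

subsection \<open>Pencils of slices of a tensor of rank at most three\<close>

lemma slice_comb_rank3_decomp:
  assumes d: "rank3_decomp M \<alpha> x y" and "j < 3" "k < 3"
  shows "slice_comb M s u j k = (\<Sum>l<3. (s * \<alpha> l 0 + u * \<alpha> l 1) * x l j * y l k)"
proof -
  have "M 0 j k = (\<Sum>l<3. \<alpha> l 0 * x l j * y l k)" "M 1 j k = (\<Sum>l<3. \<alpha> l 1 * x l j * y l k)"
    using assms unfolding rank3_decomp_def by auto
  then show ?thesis unfolding slice_comb_def sum_lessThan_3 by (simp add: algebra_simps)
qed

lemma det3_slice_comb_rank3_decomp:
  assumes d: "rank3_decomp M \<alpha> x y"
  shows "det3 (slice_comb M s u) = (s * \<alpha> 0 0 + u * \<alpha> 0 1) * (s * \<alpha> 1 0 + u * \<alpha> 1 1)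
     * (s * \<alpha> 2 0 + u * \<alpha> 2 1) * det3 (\<lambda>j l. x l j) * det3 y"
proof -
  have "det3 (slice_comb M s u) = det3 (\<lambda>j k. \<Sum>l<3. (s * \<alpha> l 0 + u * \<alpha> l 1) * x l j * y l k)"
    using slice_comb_rank3_decomp[OF d] by (intro det3_cong) auto
  then show ?thesis by (simp only: det3_sum_rank_one)
qed

lemma det3_deriv_slice_comb_rank3_decomp:
  assumes d: "rank3_decomp M \<alpha> x y"
  shows "det3_deriv (slice_comb M p0 p1) (slice_comb M q0 q1) =
     ((q0 * \<alpha> 0 0 + q1 * \<alpha> 0 1) * (p0 * \<alpha> 1 0 + p1 * \<alpha> 1 1) * (p0 * \<alpha> 2 0 + p1 * \<alpha> 2 1)
    + (p0 * \<alpha> 0 0 + p1 * \<alpha> 0 1) * (q0 * \<alpha> 1 0 + q1 * \<alpha> 1 1) * (p0 * \<alpha> 2 0 + p1 * \<alpha> 2 1)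
    + (p0 * \<alpha> 0 0 + p1 * \<alpha> 0 1) * (p0 * \<alpha> 1 0 + p1 * \<alpha> 1 1) * (q0 * \<alpha> 2 0 + q1 * \<alpha> 2 1))
      * det3 (\<lambda>j l. x l j) * det3 y"
proof -
  have "det3_deriv (slice_comb M p0 p1) (slice_comb M q0 q1)
      = det3_deriv (\<lambda>j k. \<Sum>l<3. (p0 * \<alpha> l 0 + p1 * \<alpha> l 1) * x l j * y l k)
          (\<lambda>j k. \<Sum>l<3. (q0 * \<alpha> l 0 + q1 * \<alpha> l 1) * x l j * y l k)"
    using slice_comb_rank3_decomp[OF d] by (intro det3_deriv_cong) auto
  then show ?thesis by (simp only: det3_deriv_sum_rank_one)
qed

text \<open>With \<open>d\<^sub>l\<close> the values of the three linear forms at \<open>p\<close>, a double root at \<open>p\<close> of a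
  determinant that does not vanish at \<open>q\<close> kills two of the \<open>d\<^sub>l\<close>, so the slice at \<open>p\<close> is a
  single rank-one term.\<close>
lemma double_root_slice_minor_eq_0:
  assumes d: "rank3_decomp M \<alpha> x y"
    and q: "det3 (slice_comb M q0 q1) \<noteq> 0" and p: "det3 (slice_comb M p0 p1) = 0"
    and D: "det3_deriv (slice_comb M p0 p1) (slice_comb M q0 q1) = 0"
    and jk: "j1 < 3" "j2 < 3" "k1 < 3" "k2 < 3"
  shows "slice_comb M p0 p1 j1 k1 * slice_comb M p0 p1 j2 k2
       - slice_comb M p0 p1 j1 k2 * slice_comb M p0 p1 j2 k1 = 0"
proof -
  define dp where "dp l = p0 * \<alpha> l 0 + p1 * \<alpha> l 1" for l
  define dq where "dq l = q0 * \<alpha> l 0 + q1 * \<alpha> l 1" for l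
  have q': "dq 0 * dq 1 * dq 2 * det3 (\<lambda>j l. x l j) * det3 y \<noteq> 0"
    using q det3_slice_comb_rank3_decomp[OF d] unfolding dq_def by metis
  have p': "dp 0 * dp 1 * dp 2 * det3 (\<lambda>j l. x l j) * det3 y = 0"
    using p det3_slice_comb_rank3_decomp[OF d] unfolding dp_def by metis
  have D': "(dq 0 * dp 1 * dp 2 + dp 0 * dq 1 * dp 2 + dp 0 * dp 1 * dq 2)
      * det3 (\<lambda>j l. x l j) * det3 y = 0"
    using D det3_deriv_slice_comb_rank3_decomp[OF d] unfolding dp_def dq_def by metis
  have two: "(dp 0 = 0 \<and> dp 1 = 0) \<or> (dp 0 = 0 \<and> dp 2 = 0) \<or> (dp 1 = 0 \<and> dp 2 = 0)"
    using q' p' D' by auto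
  have slice: "slice_comb M p0 p1 j k = dp 0 * x 0 j * y 0 k + dp 1 * x 1 j * y 1 k + dp 2 * x 2 j * y 2 k"
    if "j < 3" "k < 3" for j k
    using slice_comb_rank3_decomp[OF d that] unfolding dp_def sum_lessThan_3 by simp
  obtain l where "\<forall>j<3. \<forall>k<3. slice_comb M p0 p1 j k = dp l * x l j * y l k"
    using two
  proof (elim disjE conjE)
    assume "dp 0 = 0" "dp 1 = 0"
    then show thesis using slice by (intro that[of 2]) simp
  next
    assume "dp 0 = 0" "dp 2 = 0"
    then show thesis using slice by (intro that[of 1]) simp
  next
    assume "dp 1 = 0" "dp 2 = 0"
    then show thesis using slice by (intro that[of 0]) simp
  qed
  then show ?thesis using jk by (simp add: mult_ac)
qed

text \<open>The first minor forces \<open>det X \<noteq> 0\<close> and every \<open>\<alpha>\<^sub>l \<noteq> 0\<close>, the second \<open>det Y \<noteq> 0\<close>; then the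
  determinant of the pencil is a product of three nonzero linear forms.\<close>
lemma identically_singular_pencil_absurd:
  assumes d: "rank3_decomp M \<alpha> x y"
    and ik: "\<forall>n<3. ii n < 2 \<and> kk n < 3" and L: "det3 (\<lambda>j n. M (ii n) j (kk n)) \<noteq> 0"
    and ij: "\<forall>n<3. ii' n < 2 \<and> jj n < 3" and R: "det3 (\<lambda>n k. M (ii' n) (jj n) k) \<noteq> 0"
    and singular: "\<And>s u. det3 (slice_comb M s u) = 0"
  shows False
proof -
  define Z where "Z l n = \<alpha> l (ii n) * y l (kk n)" for l n
  have "det3 (\<lambda>j n. M (ii n) j (kk n)) = det3 (\<lambda>j n. \<Sum>l<3. x l j * Z l n)"
    using d ik unfolding rank3_decomp_def Z_def by (intro det3_cong) (auto simp: mult_ac)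
  then have X: "det3 (\<lambda>j l. x l j) \<noteq> 0" and Z: "det3 Z \<noteq> 0"
    using L det3_mult[of "\<lambda>j l. x l j" Z] by auto
  define Z' where "Z' n l = \<alpha> l (ii' n) * x l (jj n)" for l n
  have "det3 (\<lambda>n k. M (ii' n) (jj n) k) = det3 (\<lambda>n k. \<Sum>l<3. Z' n l * y l k)"
    using d ij unfolding rank3_decomp_def Z'_def by (intro det3_cong) auto
  then have Y: "det3 y \<noteq> 0"
    using R det3_mult[of Z' y] by auto
  have \<alpha>: "\<alpha> l 0 \<noteq> 0 \<or> \<alpha> l 1 \<noteq> 0" if "l < 3" for l
  proof (rule ccontr)
    assume "\<not> (\<alpha> l 0 \<noteq> 0 \<or> \<alpha> l 1 \<noteq> 0)"
    then have "\<alpha> l (ii n) = 0" if "n < 3" for n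
      using ik that by (metis less_2_cases One_nat_def)
    then have "det3 Z = 0" using \<open>l < 3\<close> by (intro det3_zero_row) (auto simp: Z_def)
    then show False using Z by simp
  qed
  have "\<alpha> 0 0 \<noteq> 0 \<or> \<alpha> 0 1 \<noteq> 0" "\<alpha> 1 0 \<noteq> 0 \<or> \<alpha> 1 1 \<noteq> 0" "\<alpha> 2 0 \<noteq> 0 \<or> \<alpha> 2 1 \<noteq> 0"
    using \<alpha> by simp_all
  then obtain s u
    where "(s * \<alpha> 0 0 + u * \<alpha> 0 1) * (s * \<alpha> 1 0 + u * \<alpha> 1 1) * (s * \<alpha> 2 0 + u * \<alpha> 2 1) \<noteq> 0"
    using binary_cubic_nonvanishing by blast
  then show False
    using singular[of s u] det3_slice_comb_rank3_decomp[OF d, of s u] X Y by simp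
qed

lemma rank3_decomp_of_simultaneous_diagonalization:
  assumes off: "\<forall>i<2. \<forall>l<3. \<forall>m<3. l \<noteq> m \<longrightarrow> (\<Sum>j<3. \<Sum>k<3. w l j * M i j k * v m k) = 0"
    and W: "det3 w \<noteq> 0" and V: "det3 v \<noteq> 0"
  shows "\<exists>\<alpha> x y. rank3_decomp M \<alpha> x y"
proof -
  define e where "e i l = (\<Sum>j<3. \<Sum>k<3. w l j * M i j k * v l k)" for i l
  have "rank3_decomp M (\<lambda>l i. e i l / (det3 w * det3 v)) (cofactor3 w) (cofactor3 v)"
    unfolding rank3_decomp_def
  proof (intro allI impI)
    fix i j k :: nat assume ijk: "i < 2" "j < 3" "k < 3"
    have o: "(\<Sum>j<3. \<Sum>k<3. w l j * M i j k * v m k) = 0" if "l < 3" "m < 3" "l \<noteq> m" for l m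
      using off ijk that by blast
    have "det3 w * det3 v * M i j k =
      (\<Sum>l<3. \<Sum>m<3. (\<Sum>j'<3. \<Sum>k'<3. w l j' * M i j' k' * v m k') * cofactor3 w l j * cofactor3 v m k)"
      using det3_mult_eq_cofactor_sandwich[OF ijk(2,3)] by blast
    also have "\<dots> = (\<Sum>l<3. e i l * cofactor3 w l j * cofactor3 v l k)"
      unfolding e_def using o[of 0 1] o[of 0 2] o[of 1 0] o[of 1 2] o[of 2 0] o[of 2 1]
      by (simp add: sum_lessThan_3)
    finally show "M i j k = (\<Sum>l<3. e i l / (det3 w * det3 v) * cofactor3 w l j * cofactor3 v l k)"
      using W V by (simp add: sum_lessThan_3 field_simps)
  qed
  then show ?thesis by blast
qed

lemma tensor_rank_le3_imp_rank3_decomp: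
  fixes r :: nat and a b c :: "nat \<Rightarrow> nat \<Rightarrow> complex"
  assumes r: "tensor_rank M \<le> 3"
    and finite_rank: "M = (\<lambda>i j k. \<Sum>l<r. outer (a l) (b l) (c l) i j k)"
  shows "\<exists>\<alpha> x y. rank3_decomp M \<alpha> x y"
proof -
  let ?P = "\<lambda>r. \<exists>a b c :: nat \<Rightarrow> nat \<Rightarrow> complex. M = (\<lambda>i j k. \<Sum>l<r. outer (a l) (b l) (c l) i j k)"
  have "?P r"
    by (intro exI) (fact finite_rank)
  then have "?P (LEAST r. ?P r)"
    by (rule LeastI)
  moreover have "tensor_rank M = (LEAST r. ?P r)"
    unfolding tensor_rank_def ..
  ultimately have "?P (tensor_rank M)"
    by simp
  then obtain R a b c where R: "R \<le> (3::nat)"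
    and M: "M = (\<lambda>i j k. \<Sum>l<R. outer (a l) (b l) (c l) i j k)"
    using r by blast
  define \<alpha> where "\<alpha> l = (if l < R then a l else (\<lambda>_. 0))" for l
  have "rank3_decomp M \<alpha> b c"
    unfolding rank3_decomp_def
  proof (intro allI impI)
    fix i j k :: nat assume ijk: "i < 2" "j < 3" "k < 3"
    have "M i j k = (\<Sum>l<R. \<alpha> l i * b l j * c l k)"
      using ijk unfolding M outer_def \<alpha>_def by simp
    also have "\<dots> = (\<Sum>l<3. \<alpha> l i * b l j * c l k)"
      using R by (intro sum.mono_neutral_left) (auto simp: \<alpha>_def)
    finally show "M i j k = (\<Sum>l<3. \<alpha> l i * b l j * c l k)" .
  qed
  then show ?thesis by blast
qed

lemma rank3_decomp_imp_tensor_rank_le3: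
  assumes d: "rank3_decomp M \<alpha> x y"
    and outside: "\<And>i j k. \<not> (i < 2 \<and> j < 3 \<and> k < 3) \<Longrightarrow> M i j k = 0"
  shows "tensor_rank M \<le> 3"
  unfolding tensor_rank_def
proof (rule Least_le)
  show "\<exists>a b c :: nat \<Rightarrow> nat \<Rightarrow> complex. M = (\<lambda>i j k. \<Sum>l<3. outer (a l) (b l) (c l) i j k)"
  proof (intro exI ext)
    fix i j k
    show "M i j k = (\<Sum>l<3. outer (\<alpha> l) (x l) (y l) i j k)"
      using d outside[of i j k] unfolding rank3_decomp_def outer_def
      by (cases "i < 2 \<and> j < 3 \<and> k < 3") auto
  qed
qed

subsection \<open>The line through \<open>T13\<close> in the direction of a rank-one tensor\<close>

definition T13_minus :: "complex \<Rightarrow> (nat \<Rightarrow> complex) \<Rightarrow> (nat \<Rightarrow> complex) \<Rightarrow> (nat \<Rightarrow> complex) \<Rightarrow> tensor" where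
  "T13_minus t a b c = (\<lambda>i j k. T13 i j k - t * outer a b c i j k)"

lemma T13_minus_outside: "\<not> (i < 2 \<and> j < 3 \<and> k < 3) \<Longrightarrow> T13_minus t a b c i j k = 0"
  unfolding T13_minus_def T13_def outer_def by auto

lemma T13_minus_sum_of_five:
  "T13_minus t a b c = (\<lambda>i j k. \<Sum>l<5. outer ([ebasis 0, ebasis 0, ebasis 1, ebasis 1, \<lambda>i. - t * a i] ! l)
     ([ebasis 0, ebasis 1, ebasis 0, ebasis 2, b] ! l) ([ebasis 0, ebasis 2, ebasis 1, ebasis 2, c] ! l) i j k)"
  unfolding T13_minus_def T13_def by (intro ext) (simp add: eval_nat_numeral outer_def algebra_simps)

lemma T13_minus_rank3_decomp:
  "tensor_rank (T13_minus t a b c) \<le> 3 \<Longrightarrow> \<exists>\<alpha> x y. rank3_decomp (T13_minus t a b c) \<alpha> x y"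
  using tensor_rank_le3_imp_rank3_decomp T13_minus_sum_of_five by blast

lemma tensor_rank_T13_minus_le3:
  "rank3_decomp (T13_minus t a b c) \<alpha> x y \<Longrightarrow> tensor_rank (T13_minus t a b c) \<le> 3"
  using rank3_decomp_imp_tensor_rank_le3 T13_minus_outside by blast

lemma det3_slice_comb_T13_minus:
  "det3 (slice_comb (T13_minus t a b c) s u) = - t * (a 0 * s + a 1 * u) * (b 1 * u - b 2 * s) * (c 1 * s - c 0 * u)"
  unfolding det3_def slice_comb_def T13_minus_def T13_def outer_def ebasis_def by (simp; algebra)

lemma det3_deriv_slice_comb_T13_minus:
  "det3_deriv (slice_comb (T13_minus t a b c) p0 p1) (slice_comb (T13_minus t a b c) q0 q1) = - t * (
     (a 0 * q0 + a 1 * q1) * (b 1 * p1 - b 2 * p0) * (c 1 * p0 - c 0 * p1)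
   + (a 0 * p0 + a 1 * p1) * (b 1 * q1 - b 2 * q0) * (c 1 * p0 - c 0 * p1)
   + (a 0 * p0 + a 1 * p1) * (b 1 * p1 - b 2 * p0) * (c 1 * q0 - c 0 * q1))"
  unfolding det3_deriv_def det3_def slice_comb_def T13_minus_def T13_def outer_def ebasis_def
  by (simp; algebra)

subsection \<open>Lower bounds for the rank\<close>

lemma tensor_rank_T13_minus_gt3_if_b12_eq_0:
  assumes "b 1 = 0" "b 2 = 0" "a 0 * c 0 + a 1 * c 1 = 0"
  shows "\<not> tensor_rank (T13_minus t a b c) \<le> 3"
proof
  assume "tensor_rank (T13_minus t a b c) \<le> 3"
  then obtain \<alpha> x y where d: "rank3_decomp (T13_minus t a b c) \<alpha> x y"
    using T13_minus_rank3_decomp by blast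
  have singular: "det3 (slice_comb (T13_minus t a b c) s u) = 0" for s u
    by (simp only: det3_slice_comb_T13_minus assms) simp
  have R: "det3 (\<lambda>n k. T13_minus t a b c ([0,1,0]!n) ([0,0,1]!n) k) = 1"
    using assms unfolding det3_def T13_minus_def T13_def outer_def ebasis_def by (simp; algebra)
  have L1: "det3 (\<lambda>j n. T13_minus t a b c ([0,0,1]!n) j ([0,2,2]!n)) = 1 - t * a 0 * b 0 * c 0"
    using assms unfolding det3_def T13_minus_def T13_def outer_def ebasis_def by (simp; algebra)
  have L2: "det3 (\<lambda>j n. T13_minus t a b c ([1,0,1]!n) j ([1,2,2]!n)) = 1 - t * a 1 * b 0 * c 1"
    using assms unfolding det3_def T13_minus_def T13_def outer_def ebasis_def by (simp; algebra)
  have "(1 - t * a 0 * b 0 * c 0) + (1 - t * a 1 * b 0 * c 1) = 2"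
    using assms(3) by algebra
  then have "det3 (\<lambda>j n. T13_minus t a b c ([0,0,1]!n) j ([0,2,2]!n)) \<noteq> 0
           \<or> det3 (\<lambda>j n. T13_minus t a b c ([1,0,1]!n) j ([1,2,2]!n)) \<noteq> 0"
    unfolding L1 L2 by auto
  moreover have "\<forall>n<3. [0,0,1::nat]!n < 2 \<and> [0,2,2::nat]!n < 3"
    and "\<forall>n<3. [1,0,1::nat]!n < 2 \<and> [1,2,2::nat]!n < 3"
    and ij: "\<forall>n<3. [0,1,0::nat]!n < 2 \<and> [0,0,1::nat]!n < 3"
    by (simp_all add: all_less_3)
  ultimately show False
    using identically_singular_pencil_absurd[OF d _ _ ij _ singular] R by fastforce
qed

lemma tensor_rank_T13_minus_gt3_if_c01_eq_0:
  assumes "c 0 = 0" "c 1 = 0" "a 0 * b 1 + a 1 * b 2 = 0"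
  shows "\<not> tensor_rank (T13_minus t a b c) \<le> 3"
proof
  assume "tensor_rank (T13_minus t a b c) \<le> 3"
  then obtain \<alpha> x y where d: "rank3_decomp (T13_minus t a b c) \<alpha> x y"
    using T13_minus_rank3_decomp by blast
  have singular: "det3 (slice_comb (T13_minus t a b c) s u) = 0" for s u
    by (simp only: det3_slice_comb_T13_minus assms) simp
  have L: "det3 (\<lambda>j n. T13_minus t a b c ([0,0,1]!n) j ([0,2,2]!n)) = 1"
    using assms unfolding det3_def T13_minus_def T13_def outer_def ebasis_def by (simp; algebra)
  have R1: "det3 (\<lambda>n k. T13_minus t a b c ([0,1,0]!n) ([0,0,1]!n) k) = 1 - t * a 0 * b 1 * c 2"
    using assms unfolding det3_def T13_minus_def T13_def outer_def ebasis_def by (simp; algebra)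
  have R2: "det3 (\<lambda>n k. T13_minus t a b c ([0,1,1]!n) ([0,0,2]!n) k) = 1 - t * a 1 * b 2 * c 2"
    using assms unfolding det3_def T13_minus_def T13_def outer_def ebasis_def by (simp; algebra)
  have "(1 - t * a 0 * b 1 * c 2) + (1 - t * a 1 * b 2 * c 2) = 2"
    using assms(3) by algebra
  then have "det3 (\<lambda>n k. T13_minus t a b c ([0,1,0]!n) ([0,0,1]!n) k) \<noteq> 0
           \<or> det3 (\<lambda>n k. T13_minus t a b c ([0,1,1]!n) ([0,0,2]!n) k) \<noteq> 0"
    unfolding R1 R2 by auto
  moreover have ik: "\<forall>n<3. [0,0,1::nat]!n < 2 \<and> [0,2,2::nat]!n < 3"
    and "\<forall>n<3. [0,1,0::nat]!n < 2 \<and> [0,0,1::nat]!n < 3"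
    and "\<forall>n<3. [0,1,1::nat]!n < 2 \<and> [0,0,2::nat]!n < 3"
    by (simp_all add: all_less_3)
  ultimately show False
    using identically_singular_pencil_absurd[OF d ik _ _ _ singular] L by fastforce
qed

lemma tensor_rank_T13: "tensor_rank T13 = 4"
proof -
  have "T13_minus 0 a b c = T13" for a b c
    unfolding T13_minus_def by simp
  moreover have "\<not> tensor_rank (T13_minus 0 (\<lambda>_. 0) (\<lambda>_. 0) (\<lambda>_. 0)) \<le> 3"
    by (rule tensor_rank_T13_minus_gt3_if_b12_eq_0) simp_all
  moreover have "tensor_rank T13 \<le> 4"
    unfolding tensor_rank_def
  proof (rule Least_le)
    show "\<exists>a b c :: nat \<Rightarrow> nat \<Rightarrow> complex. T13 = (\<lambda>i j k. \<Sum>l<4. outer (a l) (b l) (c l) i j k)"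
      by (rule exI[of _ "\<lambda>l. [ebasis 0, ebasis 0, ebasis 1, ebasis 1] ! l"],
          rule exI[of _ "\<lambda>l. [ebasis 0, ebasis 1, ebasis 0, ebasis 2] ! l"],
          rule exI[of _ "\<lambda>l. [ebasis 0, ebasis 2, ebasis 1, ebasis 2] ! l"])
        (simp add: T13_def eval_nat_numeral)
  qed
  ultimately show ?thesis by simp
qed

lemma tensor_rank_T13_minus_gt3_if_double_root:
  assumes a: "a 0 \<noteq> 0 \<or> a 1 \<noteq> 0" and b: "b 1 \<noteq> 0 \<or> b 2 \<noteq> 0" and c: "c 0 \<noteq> 0 \<or> c 1 \<noteq> 0"
    and t: "t \<noteq> 0"
    and p: "det3 (slice_comb (T13_minus t a b c) p0 p1) = 0"
    and D: "\<And>q0 q1. det3_deriv (slice_comb (T13_minus t a b c) p0 p1) (slice_comb (T13_minus t a b c) q0 q1) = 0"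
    and jk: "j1 < 3" "j2 < 3" "k1 < 3" "k2 < 3"
    and minor: "slice_comb (T13_minus t a b c) p0 p1 j1 k1 * slice_comb (T13_minus t a b c) p0 p1 j2 k2
      - slice_comb (T13_minus t a b c) p0 p1 j1 k2 * slice_comb (T13_minus t a b c) p0 p1 j2 k1 \<noteq> 0"
  shows "\<not> tensor_rank (T13_minus t a b c) \<le> 3"
proof
  assume "tensor_rank (T13_minus t a b c) \<le> 3"
  then obtain \<alpha> x y where d: "rank3_decomp (T13_minus t a b c) \<alpha> x y"
    using T13_minus_rank3_decomp by blast
  obtain s u where "(s * a 0 + u * a 1) * (s * (- b 2) + u * b 1) * (s * c 1 + u * (- c 0)) \<noteq> 0"
    using binary_cubic_nonvanishing[of "a 0" "a 1" "- b 2" "b 1" "c 1" "- c 0"] a b c by auto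
  moreover have "det3 (slice_comb (T13_minus t a b c) s u)
      = - t * ((s * a 0 + u * a 1) * (s * (- b 2) + u * b 1) * (s * c 1 + u * (- c 0)))"
    unfolding det3_slice_comb_T13_minus by algebra
  ultimately have "det3 (slice_comb (T13_minus t a b c) s u) \<noteq> 0"
    using t by simp
  from double_root_slice_minor_eq_0[OF d this p D jk] minor show False by simp
qed

lemma tensor_rank_T13_minus_gt3_if_linear:
  assumes a: "a 0 \<noteq> 0 \<or> a 1 \<noteq> 0" and b: "b 1 \<noteq> 0 \<or> b 2 \<noteq> 0" and c: "c 0 \<noteq> 0 \<or> c 1 \<noteq> 0"
    and t: "t \<noteq> 0" and L: "a 0 * c 0 + a 1 * c 1 = 0 \<or> a 0 * b 1 + a 1 * b 2 = 0"
  shows "\<not> tensor_rank (T13_minus t a b c) \<le> 3"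
proof -
  let ?S = "slice_comb (T13_minus t a b c) (- a 1) (a 0)"
  have p: "det3 ?S = 0"
    unfolding det3_slice_comb_T13_minus by (simp add: algebra_simps)
  have D: "det3_deriv ?S (slice_comb (T13_minus t a b c) q0 q1) = 0" for q0 q1
    unfolding det3_deriv_slice_comb_T13_minus using L by (elim disjE; algebra)
  have m1: "?S 0 0 * ?S 1 2 - ?S 0 2 * ?S 1 0 = (a 1)^2"
    and m2: "?S 0 1 * ?S 2 2 - ?S 0 2 * ?S 2 1 = (a 0)^2"
    unfolding slice_comb_def T13_minus_def T13_def outer_def ebasis_def by (simp; algebra)+
  show ?thesis
  proof (cases "a 1 = 0")
    case True
    then show ?thesis using m2 a
      by (intro tensor_rank_T13_minus_gt3_if_double_root[OF a b c t p D, of 0 2 1 2]) simp_all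
  next
    case False
    then show ?thesis using m1
      by (intro tensor_rank_T13_minus_gt3_if_double_root[OF a b c t p D, of 0 1 0 2]) simp_all
  qed
qed

lemma tensor_rank_T13_minus_gt3_if_phi_eq_0:
  assumes a: "a 0 \<noteq> 0 \<or> a 1 \<noteq> 0" and b: "b 1 \<noteq> 0 \<or> b 2 \<noteq> 0" and c: "c 0 \<noteq> 0 \<or> c 1 \<noteq> 0"
    and t: "t \<noteq> 0" and bc: "b 2 * c 0 - b 1 * c 1 = 0" and ph: "phi a b c = 0"
  shows "\<not> tensor_rank (T13_minus t a b c) \<le> 3"
proof -
  let ?S = "slice_comb (T13_minus t a b c) (b 1) (b 2)"
  have p: "det3 ?S = 0"
    unfolding det3_slice_comb_T13_minus by (simp add: algebra_simps)
  have D: "det3_deriv ?S (slice_comb (T13_minus t a b c) q0 q1) = 0" for q0 q1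
    unfolding det3_deriv_slice_comb_T13_minus using bc by algebra
  have m1: "?S 0 0 * ?S 1 2 - ?S 0 2 * ?S 1 0 = (b 1)^2"
    and m2: "?S 0 1 * ?S 2 2 - ?S 0 2 * ?S 2 1 = (b 2)^2"
    using bc ph unfolding phi_def slice_comb_def T13_minus_def T13_def outer_def ebasis_def
    by (simp; algebra)+
  show ?thesis
  proof (cases "b 1 = 0")
    case True
    then show ?thesis using m2 b
      by (intro tensor_rank_T13_minus_gt3_if_double_root[OF a b c t p D, of 0 2 1 2]) simp_all
  next
    case False
    then show ?thesis using m1
      by (intro tensor_rank_T13_minus_gt3_if_double_root[OF a b c t p D, of 0 1 0 2]) simp_all
  qed
qed

subsection \<open>Decompositions into three rank-one tensors\<close>

lemma tensor_rank_T13_minus_le3_if_b12_eq_0: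
  assumes b: "b 1 = 0" "b 2 = 0" and h: "t * phi a b c = 1"
  shows "tensor_rank (T13_minus t a b c) \<le> 3"
proof (rule tensor_rank_T13_minus_le3)
  let ?T = "t * b 0"
  have h': "t * (b 0 * (a 0 * c 0 + a 1 * c 1)) = 1"
    using h b unfolding phi_def by (simp add: algebra_simps)
  show "rank3_decomp (T13_minus t a b c) (\<lambda>l i. [[?T * c 1, - ?T * c 0], [1, 0], [0, 1]] ! l ! i)
     (\<lambda>l j. [[1, 0, 0], [- ?T * c 2 * a 0, 1, 0], [- ?T * c 2 * a 1, 0, 1]] ! l ! j)
     (\<lambda>l k. [[a 1, - a 0, 0], [0, 0, 1], [0, 0, 1]] ! l ! k)"
    using h' b unfolding rank3_decomp_def all_less_2 all_less_3 sum_lessThan_3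
      T13_minus_def T13_def outer_def ebasis_def
    by (simp; algebra)
qed

lemma tensor_rank_T13_minus_le3_if_c01_eq_0:
  assumes c: "c 0 = 0" "c 1 = 0" and h: "t * phi a b c = 1"
  shows "tensor_rank (T13_minus t a b c) \<le> 3"
proof (rule tensor_rank_T13_minus_le3)
  let ?T = "t * c 2"
  have h': "t * (c 2 * (a 0 * b 1 + a 1 * b 2)) = 1"
    using h c unfolding phi_def by (simp add: algebra_simps)
  show "rank3_decomp (T13_minus t a b c) (\<lambda>l i. [[?T * b 2, - ?T * b 1], [1, 0], [0, 1]] ! l ! i)
     (\<lambda>l j. [[0, a 1, - a 0], [1, 0, 0], [1, 0, 0]] ! l ! j)
     (\<lambda>l k. [[0, 0, 1], [1, 0, - ?T * b 0 * a 0], [0, 1, - ?T * b 0 * a 1]] ! l ! k)"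
    using h' c unfolding rank3_decomp_def all_less_2 all_less_3 sum_lessThan_3
      T13_minus_def T13_def outer_def ebasis_def
    by (simp; algebra)
qed

lemma tensor_rank_T13_minus_le3_if_bc_eq_0:
  assumes bc: "b 2 * c 0 - b 1 * c 1 = 0" and h: "t * phi a b c = 1"
    and d: "d * (a 0 * b 1 + a 1 * b 2) = 1"
  shows "tensor_rank (T13_minus t a b c) \<le> 3"
proof (rule tensor_rank_T13_minus_le3)
  let ?T = "t * (a 0 * b 1 + a 1 * b 2)"
  have h': "t * (a 0 * b 0 * c 0 + a 1 * b 0 * c 1 + a 0 * b 1 * c 2 + a 1 * b 2 * c 2) = 1"
    using h unfolding phi_def by simp
  show "rank3_decomp (T13_minus t a b c)
     (\<lambda>l i. [[a 0 * d, a 1 * d], [- b 2 * d, b 1 * d], [- b 2 * d, b 1 * d]] ! l ! i)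
     (\<lambda>l j. [[?T * c 2, - ?T * c 0, - ?T * c 1], [1, 0, 0], [0, - a 1, a 0]] ! l ! j)
     (\<lambda>l k. [[b 1, b 2, - b 0], [- a 1, a 0, 0], [0, 0, 1]] ! l ! k)"
    using h' bc d unfolding rank3_decomp_def all_less_2 all_less_3 sum_lessThan_3
      T13_minus_def T13_def outer_def ebasis_def
    by (simp; algebra)
qed

definition diag_left :: "(nat \<Rightarrow> complex) \<Rightarrow> (nat \<Rightarrow> complex) \<Rightarrow> (nat \<Rightarrow> complex) \<Rightarrow> mat" where
  "diag_left a b c = (let L = a 0 * c 0 + a 1 * c 1 in
     (\<lambda>l j. [[0, a 0, a 1], [0, b 2, - b 1],
             [L * (b 2 * c 0 - b 1 * c 1), c 1 * (L * b 0 - 1) + L * b 2 * c 2,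
              - c 0 * (L * b 0 - 1) - L * b 1 * c 2]] ! l ! j))"

definition diag_right :: "(nat \<Rightarrow> complex) \<Rightarrow> (nat \<Rightarrow> complex) \<Rightarrow> (nat \<Rightarrow> complex) \<Rightarrow> mat" where
  "diag_right a b c = (let L = a 0 * b 1 + a 1 * b 2 in
     (\<lambda>l k. [[a 0, a 1, 0],
             [b 2 * (L * c 2 - 1) + L * b 0 * c 1, - b 1 * (L * c 2 - 1) - L * b 0 * c 0,
              L * (b 1 * c 1 - b 2 * c 0)], [c 1, - c 0, 0]] ! l ! k))"

lemma diag_left_right_off_diagonal:
  "\<forall>i<2. \<forall>l<3. \<forall>m<3. l \<noteq> m \<longrightarrow>
    (\<Sum>j<3. \<Sum>k<3. diag_left a b c l j * T13_minus 1 a b c i j k * diag_right a b c m k) = 0"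
  unfolding diag_left_def diag_right_def Let_def all_less_2 all_less_3 sum_lessThan_3
    T13_minus_def T13_def outer_def ebasis_def
  by (simp; algebra)

lemma det3_diag_left:
  "det3 (diag_left a b c) = - (a 0 * c 0 + a 1 * c 1) * (b 2 * c 0 - b 1 * c 1) * (a 0 * b 1 + a 1 * b 2)"
  unfolding diag_left_def Let_def det3_def by (simp; algebra)

lemma det3_diag_right:
  "det3 (diag_right a b c) = - (a 0 * b 1 + a 1 * b 2) * (b 2 * c 0 - b 1 * c 1) * (a 0 * c 0 + a 1 * c 1)"
  unfolding diag_right_def Let_def det3_def by (simp; algebra)

lemma tensor_rank_T13_minus_le3_generic:
  assumes "a 0 * b 1 + a 1 * b 2 \<noteq> 0" "a 0 * c 0 + a 1 * c 1 \<noteq> 0" "b 2 * c 0 - b 1 * c 1 \<noteq> 0"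
  shows "tensor_rank (T13_minus 1 a b c) \<le> 3"
proof -
  have "\<exists>\<alpha> x y. rank3_decomp (T13_minus 1 a b c) \<alpha> x y"
  proof (rule rank3_decomp_of_simultaneous_diagonalization)
    show "\<forall>i<2. \<forall>l<3. \<forall>m<3. l \<noteq> m \<longrightarrow>
      (\<Sum>j<3. \<Sum>k<3. diag_left a b c l j * T13_minus 1 a b c i j k * diag_right a b c m k) = 0"
      by (rule diag_left_right_off_diagonal)
    show "det3 (diag_left a b c) \<noteq> 0" "det3 (diag_right a b c) \<noteq> 0"
      unfolding det3_diag_left det3_diag_right using assms by (metis mult_eq_0_iff neg_equal_0_iff_equal)+
  qed
  then show ?thesis using tensor_rank_T13_minus_le3 by blast
qed

subsection \<open>The forbidden locus\<close>

lemma forbidden_T13_iff: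
  "forbidden T13 (outer a b c) \<longleftrightarrow> (\<forall>t. t \<noteq> 0 \<longrightarrow> \<not> tensor_rank (T13_minus t a b c) \<le> 3)"
proof -
  have "4 \<le> tensor_rank M \<longleftrightarrow> \<not> tensor_rank M \<le> 3" for M
    by auto
  then have "forbidden T13 (outer a b c) \<longleftrightarrow> (\<forall>t. \<not> tensor_rank (T13_minus t a b c) \<le> 3)"
    unfolding forbidden_def tensor_rank_T13 T13_minus_def[symmetric] by simp
  moreover have "\<not> tensor_rank (T13_minus t a b c) \<le> 3" if "t = 0" for t
    using that tensor_rank_T13 by (simp add: T13_minus_def)
  ultimately show ?thesis
    by blast
qed

lemma forbidden_T13_if_b12_eq_0:
  assumes b: "b 1 = 0" "b 2 = 0" "b 0 \<noteq> 0"
  shows "forbidden T13 (outer a b c) \<longleftrightarrow> phi a b c = 0"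
proof
  assume forbidden: "forbidden T13 (outer a b c)"
  show "phi a b c = 0"
  proof (rule ccontr)
    assume "phi a b c \<noteq> 0"
    then have "tensor_rank (T13_minus (inverse (phi a b c)) a b c) \<le> 3"
      by (intro tensor_rank_T13_minus_le3_if_b12_eq_0 b) simp
    with forbidden \<open>phi a b c \<noteq> 0\<close> show False
      unfolding forbidden_T13_iff by simp
  qed
next
  assume "phi a b c = 0"
  moreover have "phi a b c = b 0 * (a 0 * c 0 + a 1 * c 1)"
    using b unfolding phi_def by (simp add: algebra_simps)
  ultimately have "a 0 * c 0 + a 1 * c 1 = 0"
    using b by simp
  then show "forbidden T13 (outer a b c)"
    unfolding forbidden_T13_iff using tensor_rank_T13_minus_gt3_if_b12_eq_0 b by blast
qed

lemma forbidden_T13_if_c01_eq_0: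
  assumes c: "c 0 = 0" "c 1 = 0" "c 2 \<noteq> 0"
  shows "forbidden T13 (outer a b c) \<longleftrightarrow> phi a b c = 0"
proof
  assume forbidden: "forbidden T13 (outer a b c)"
  show "phi a b c = 0"
  proof (rule ccontr)
    assume "phi a b c \<noteq> 0"
    then have "tensor_rank (T13_minus (inverse (phi a b c)) a b c) \<le> 3"
      by (intro tensor_rank_T13_minus_le3_if_c01_eq_0 c) simp
    with forbidden \<open>phi a b c \<noteq> 0\<close> show False
      unfolding forbidden_T13_iff by simp
  qed
next
  assume "phi a b c = 0"
  moreover have "phi a b c = c 2 * (a 0 * b 1 + a 1 * b 2)"
    using c unfolding phi_def by (simp add: algebra_simps)
  ultimately have "a 0 * b 1 + a 1 * b 2 = 0"
    using c by simp
  then show "forbidden T13 (outer a b c)"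
    unfolding forbidden_T13_iff using tensor_rank_T13_minus_gt3_if_c01_eq_0 c by blast
qed

lemma forbidden_T13_generic:
  assumes a: "a 0 \<noteq> 0 \<or> a 1 \<noteq> 0" and b: "b 1 \<noteq> 0 \<or> b 2 \<noteq> 0" and c: "c 0 \<noteq> 0 \<or> c 1 \<noteq> 0"
  shows "forbidden T13 (outer a b c) \<longleftrightarrow>
    a 0 * c 0 + a 1 * c 1 = 0 \<or> a 0 * b 1 + a 1 * b 2 = 0 \<or> (b 2 * c 0 - b 1 * c 1 = 0 \<and> phi a b c = 0)"
proof
  assume forbidden: "forbidden T13 (outer a b c)"
  show "a 0 * c 0 + a 1 * c 1 = 0 \<or> a 0 * b 1 + a 1 * b 2 = 0 \<or> (b 2 * c 0 - b 1 * c 1 = 0 \<and> phi a b c = 0)"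
  proof (rule ccontr)
    assume "\<not> ?thesis"
    then have Lc: "a 0 * c 0 + a 1 * c 1 \<noteq> 0" and Lb: "a 0 * b 1 + a 1 * b 2 \<noteq> 0"
      and bc_phi: "b 2 * c 0 - b 1 * c 1 \<noteq> 0 \<or> phi a b c \<noteq> 0"
      by auto
    obtain t where "t \<noteq> 0" "tensor_rank (T13_minus t a b c) \<le> 3"
    proof (cases "b 2 * c 0 - b 1 * c 1 = 0")
      case True
      then have "phi a b c \<noteq> 0"
        using bc_phi by simp
      moreover have "tensor_rank (T13_minus (inverse (phi a b c)) a b c) \<le> 3"
        using True Lb \<open>phi a b c \<noteq> 0\<close>
        by (intro tensor_rank_T13_minus_le3_if_bc_eq_0[where d = "inverse (a 0 * b 1 + a 1 * b 2)"]) simp_all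
      ultimately show ?thesis
        by (intro that[of "inverse (phi a b c)"]) simp_all
    next
      case False
      then show ?thesis
        using that[of 1] tensor_rank_T13_minus_le3_generic Lb Lc by simp
    qed
    with forbidden show False
      unfolding forbidden_T13_iff by blast
  qed
next
  assume "a 0 * c 0 + a 1 * c 1 = 0 \<or> a 0 * b 1 + a 1 * b 2 = 0 \<or> (b 2 * c 0 - b 1 * c 1 = 0 \<and> phi a b c = 0)"
  then show "forbidden T13 (outer a b c)"
    unfolding forbidden_T13_iff
    using tensor_rank_T13_minus_gt3_if_linear[OF a b c] tensor_rank_T13_minus_gt3_if_phi_eq_0[OF a b c]
    by blast
qed

theorem mainTheorem8:
  fixes a b c :: "nat \<Rightarrow> complex"
  assumes "a 0 \<noteq> 0 \<or> a 1 \<noteq> 0"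
      and "b 0 \<noteq> 0 \<or> b 1 \<noteq> 0 \<or> b 2 \<noteq> 0"
      and "c 0 \<noteq> 0 \<or> c 1 \<noteq> 0 \<or> c 2 \<noteq> 0"
  shows "forbidden T13 (outer a b c) \<longleftrightarrow>
    ((a 0 * c 0 + a 1 * c 1 = 0 \<or> a 0 * b 1 + a 1 * b 2 = 0)
       \<and> \<not> (b 1 = 0 \<and> b 2 = 0) \<and> \<not> (c 0 = 0 \<and> c 1 = 0))
    \<or> ((b 2 * c 0 - b 1 * c 1 = 0 \<or> a 0 * c 0 + a 1 * c 1 = 0 \<or> a 0 * b 1 + a 1 * b 2 = 0)
       \<and> phi a b c = 0)"
proof (cases "b 1 = 0 \<and> b 2 = 0")
  case True
  then show ?thesis using forbidden_T13_if_b12_eq_0[of b a c] assms(2) by auto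
next
  case b: False
  show ?thesis
  proof (cases "c 0 = 0 \<and> c 1 = 0")
    case True
    then show ?thesis using forbidden_T13_if_c01_eq_0[of c a b] assms(3) by auto
  next
    case False
    then show ?thesis using forbidden_T13_generic[OF assms(1)] b by auto
  qed
qed

end
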